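(* Let $\mathcal H_\mathbb R$ be a real Hilbert space with $\dim\mathcal H_\mathbb R>2$. Then the Banach–Lie algebra $\mathfrak o(\mathcal H_\mathbb R)$ has no non-trivial open invariant cones: every non-empty open convex cone in $\mathfrak o(\mathcal H_\mathbb R)$ invariant under the adjoint action of $O(\mathcal H_\mathbb R)$ equals $\mathfrak o(\mathcal H_\mathbb R)$.
   Context: $\mathfrak o(\mathcal H_\mathbb R)$ denotes the Banach–Lie algebra of bounded skew-symmetric operators on $\mathcal H_\mathbb R$ (operator norm), with adjoint action $x\mapsto gxg^{-1}$ of the orthogonal group $O(\mathcal H_\mathbb R)$. A convex cone $W$ satisfies $W+W\subseteq W$, $tW\subseteq W$ for $t>0$. *)

theory Defs
  imports "HOL-Analysis.Analysis"
begin

definition skew_ops :: "('a::real_inner \<Rightarrow>\<^sub>L 'a) set" where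
  "skew_ops = {A. \<forall>x y. inner (blinfun_apply A x) y = - inner x (blinfun_apply A y)}"

definition orth_group :: "('a::real_inner \<Rightarrow>\<^sub>L 'a) set" where
  "orth_group = {g. (\<forall>x y. inner (blinfun_apply g x) (blinfun_apply g y) = inner x y)
                     \<and> surj (blinfun_apply g)}"

definition convex_cone_set :: "'b::real_vector set \<Rightarrow> bool" where
  "convex_cone_set W \<longleftrightarrow> (\<forall>x\<in>W. \<forall>y\<in>W. x + y \<in> W) \<and> (\<forall>t>0. \<forall>x\<in>W. scaleR t x \<in> W)"

definition Ad_invariant :: "('a::real_inner \<Rightarrow>\<^sub>L 'a) set \<Rightarrow> bool" where
  "Ad_invariant W \<longleftrightarrow> (\<forall>g\<in>orth_group. \<forall>h. g o\<^sub>L h = id_blinfun \<and> h o\<^sub>L g = id_blinfun \<longrightarrow>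
      (\<forall>x\<in>W. g o\<^sub>L x o\<^sub>L h \<in> W))"

end

theory Submission
  imports Defs
begin

(*
  A skew operator X on a real Hilbert space is conjugate to -X by an orthogonal involution.
  By Zorn's lemma take a maximal family of vectors whose X-orbits are mutually orthogonal;
  the closed spans U of the even and V of the odd powers of X applied to the family are
  orthogonal, interchanged by X, and (by maximality and the projection theorem) span the
  whole space. The reflection in U along V then anticommutes with X.
  Hence an Ad-invariant cone containing x contains -x and therefore 0, and an open cone
  containing 0 is everything.
*)

lemma parallelogram_law:
  fixes a b :: "'a::real_inner"
  shows "(norm (a + b))\<^sup>2 + (norm (a - b))\<^sup>2 = 2 * (norm a)\<^sup>2 + 2 * (norm b)\<^sup>2"
  by (simp add: power2_norm_eq_inner inner_add_left inner_add_right inner_diff_left inner_diff_right inner_commute)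

lemma convex_midpoint_dist_estimate:
  fixes M :: "'a::real_inner set"
  assumes "convex M" "a \<in> M" "b \<in> M"
  shows "(dist a b)\<^sup>2 \<le> 2 * (dist y a)\<^sup>2 + 2 * (dist y b)\<^sup>2 - 4 * (INF z\<in>M. (dist y z)\<^sup>2)"
proof -
  have mid: "(1/2) *\<^sub>R a + (1/2) *\<^sub>R b \<in> M"
    using convexD[OF assms] by simp
  have "(INF z\<in>M. (dist y z)\<^sup>2) \<le> (dist y ((1/2) *\<^sub>R a + (1/2) *\<^sub>R b))\<^sup>2"
    by (rule cINF_lower[OF _ mid]) (auto intro: bdd_belowI2[where m=0])
  also have "\<dots> = (norm ((y - a) + (y - b)))\<^sup>2 / 4"
  proof -
    have "y - ((1/2) *\<^sub>R a + (1/2) *\<^sub>R b) = (1/2) *\<^sub>R ((y - a) + (y - b))"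
      by (simp add: algebra_simps flip: scaleR_add_left)
    then show ?thesis by (simp add: dist_norm power_divide)
  qed
  finally show ?thesis
    using parallelogram_law[of "y - a" "y - b"] by (simp add: dist_norm norm_minus_commute)
qed

lemma closed_convex_closest_point_exists:
  fixes M :: "'a::{real_inner,complete_space} set"
  assumes "closed M" "convex M" "M \<noteq> {}"
  shows "\<exists>m\<in>M. \<forall>z\<in>M. dist y m \<le> dist y z"
proof -
  define d where "d = (INF z\<in>M. (dist y z)\<^sup>2)"
  have bdd: "bdd_below ((\<lambda>z. (dist y z)\<^sup>2) ` M)"
    by (auto intro: bdd_belowI2[where m=0])
  have d_le: "d \<le> (dist y z)\<^sup>2" if "z \<in> M" for z
    unfolding d_def using bdd that by (rule cINF_lower)
  have "\<exists>m\<in>M. (dist y m)\<^sup>2 < d + 1 / Suc n" for n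
    using cINF_less_iff[OF assms(3) bdd, of "d + 1 / Suc n"] by (simp add: d_def)
  then obtain m where mM: "\<And>n. m n \<in> M" and m_lt: "\<And>n. (dist y (m n))\<^sup>2 < d + 1 / Suc n"
    by metis
  have m_close: "(dist (m n) (m k))\<^sup>2 < 2 / Suc n + 2 / Suc k" for n k
    using convex_midpoint_dist_estimate[OF assms(2) mM mM, of n k y] m_lt[of n] m_lt[of k]
    unfolding d_def by linarith
  have "Cauchy m"
  proof (rule metric_CauchyI)
    fix e :: real assume "e > 0"
    then obtain N where N: "inverse (Suc N) < e\<^sup>2 / 4"
      using reals_Archimedean[of "e\<^sup>2 / 4"] by auto
    have "dist (m n) (m k) < e" if "n \<ge> N" "k \<ge> N" for n k
    proof -
      have "2 / Suc n \<le> 2 / Suc N" "2 / Suc k \<le> 2 / Suc N"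
        using that by (simp_all add: frac_le)
      then have "2 / Suc n + 2 / Suc k \<le> 4 * inverse (Suc N)"
        by (simp add: inverse_eq_divide)
      with m_close[of n k] N have "(dist (m n) (m k))\<^sup>2 < e\<^sup>2" by linarith
      then show ?thesis using \<open>e > 0\<close> by (simp add: power_less_imp_less_base)
    qed
    then show "\<exists>N. \<forall>n\<ge>N. \<forall>k\<ge>N. dist (m n) (m k) < e" by blast
  qed
  then obtain m0 where lim: "m \<longlonglongrightarrow> m0"
    by (auto simp: convergent_eq_Cauchy[symmetric] convergent_def)
  have m0M: "m0 \<in> M" using closed_sequentially[OF assms(1)] mM lim by blast
  have "(\<lambda>n. (dist y (m n))\<^sup>2) \<longlonglongrightarrow> (dist y m0)\<^sup>2"
    by (intro tendsto_intros lim)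
  moreover have "(\<lambda>n. d + 1 / Suc n) \<longlonglongrightarrow> d"
    using tendsto_add[OF tendsto_const LIMSEQ_inverse_real_of_nat, of d]
    by (simp add: inverse_eq_divide)
  ultimately have "(dist y m0)\<^sup>2 \<le> d"
    by (rule LIMSEQ_le) (use m_lt less_imp_le in blast)
  then have "dist y m0 \<le> dist y z" if "z \<in> M" for z
    using d_le[OF that] by (simp add: power2_le_imp_le)
  with m0M show ?thesis by blast
qed

lemma subspace_closure:
  fixes S :: "'a::real_normed_vector set"
  assumes "subspace S"
  shows "subspace (closure S)"
  unfolding subspace_def
proof (intro conjI ballI allI)
  show "0 \<in> closure S"
    using assms closure_subset subspace_0 by blast
next
  fix x y assume "x \<in> closure S" "y \<in> closure S"
  then obtain a b where "\<forall>n. a n \<in> S" "a \<longlonglongrightarrow> x" "\<forall>n. b n \<in> S" "b \<longlonglongrightarrow> y"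
    unfolding closure_sequential by blast
  then show "x + y \<in> closure S"
    unfolding closure_sequential using assms
    by (intro exI[of _ "\<lambda>n. a n + b n"]) (auto intro: tendsto_add subspace_add)
next
  fix c :: real and x assume "x \<in> closure S"
  then obtain a where "\<forall>n. a n \<in> S" "a \<longlonglongrightarrow> x"
    unfolding closure_sequential by blast
  then show "c *\<^sub>R x \<in> closure S"
    unfolding closure_sequential using assms
    by (intro exI[of _ "\<lambda>n. c *\<^sub>R a n"]) (auto intro: tendsto_scaleR subspace_scale)
qed

lemma closed_orthogonal_comp:
  fixes B :: "'a::real_inner set"
  shows "closed (B\<^sup>\<bottom>)"
proof -
  have "B\<^sup>\<bottom> = (\<Inter>b\<in>B. {a. inner b a = 0})"
    by (auto simp: orthogonal_comp_def orthogonal_def)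
  then show ?thesis
    by (simp add: closed_INT closed_hyperplane)
qed

lemma closure_span_subset_orthogonal_comp:
  fixes A B :: "'a::real_inner set"
  assumes "A \<subseteq> B\<^sup>\<bottom>"
  shows "closure (span A) \<subseteq> B\<^sup>\<bottom>"
  using assms by (intro closure_minimal span_minimal subspace_orthogonal_comp closed_orthogonal_comp)

lemma subset_orthogonal_comp_commute:
  fixes A B :: "'a::real_inner set"
  shows "A \<subseteq> B\<^sup>\<bottom> \<longleftrightarrow> B \<subseteq> A\<^sup>\<bottom>"
  unfolding orthogonal_comp_def using orthogonal_commute by blast

lemma closure_span_orthogonal_comp:
  fixes A B :: "'a::real_inner set"
  assumes "A \<subseteq> B\<^sup>\<bottom>"
  shows "closure (span A) \<subseteq> (closure (span B))\<^sup>\<bottom>"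
  using assms subset_orthogonal_comp_commute closure_span_subset_orthogonal_comp by metis

lemma bounded_linear_image_closure_span_subset:
  assumes "bounded_linear f" "f ` A \<subseteq> B"
  shows "f ` closure (span A) \<subseteq> closure (span B)"
proof -
  have "f ` closure (span A) \<subseteq> closure (f ` span A)"
    using assms(1) by (rule closure_bounded_linear_image_subset)
  also have "f ` span A = span (f ` A)"
    using assms(1) bounded_linear.linear linear_span_image by metis
  also have "closure (span (f ` A)) \<subseteq> closure (span B)"
    using assms(2) by (intro closure_mono span_mono)
  finally show ?thesis .
qed

lemma closest_point_subspace_orthogonal:
  fixes M :: "'a::real_inner set"
  assumes "subspace M" "closed M" "m \<in> M" "\<forall>z\<in>M. dist y m \<le> dist y z"
  shows "y - m \<in> M\<^sup>\<bottom>"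
proof -
  have le: "inner (y - m) v \<le> 0" if "v \<in> M" for v
    using any_closest_point_dot[of M m "m + v" y] assms that
    by (simp add: subspace_imp_convex subspace_add)
  have "inner z (y - m) = 0" if "z \<in> M" for z
    using le[OF that] le[of "- z"] that assms(1) by (simp add: subspace_neg inner_commute)
  then show ?thesis
    by (simp add: orthogonal_comp_def orthogonal_def)
qed

lemma closed_subspace_orthogonal_decomposition:
  fixes M :: "'a::{real_inner,complete_space} set"
  assumes "subspace M" "closed M"
  shows "\<exists>m\<in>M. y - m \<in> M\<^sup>\<bottom>"
proof -
  obtain m where "m \<in> M" "\<forall>z\<in>M. dist y m \<le> dist y z"
    using closed_convex_closest_point_exists[OF assms(2) subspace_imp_convex[OF assms(1)]]
      subspace_0[OF assms(1)] by blast
  with closest_point_subspace_orthogonal[OF assms] show ?thesis by blast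
qed

definition orth_proj :: "'a::real_inner set \<Rightarrow> 'a \<Rightarrow> 'a" where
  "orth_proj M y = (SOME m. m \<in> M \<and> y - m \<in> M\<^sup>\<bottom>)"

lemma orth_proj_unique:
  fixes M :: "'a::real_inner set"
  assumes "subspace M" "m \<in> M" "y - m \<in> M\<^sup>\<bottom>"
  shows "orth_proj M y = m"
proof -
  define p where "p = orth_proj M y"
  have p: "p \<in> M" "y - p \<in> M\<^sup>\<bottom>"
    using someI[of "\<lambda>m. m \<in> M \<and> y - m \<in> M\<^sup>\<bottom>", OF conjI[OF assms(2,3)]]
    unfolding p_def orth_proj_def by blast+
  have "p - m \<in> M"
    using assms(1,2) p(1) subspace_diff by blast
  moreover have "p - m \<in> M\<^sup>\<bottom>"
    using subspace_diff[OF subspace_orthogonal_comp assms(3) p(2)] by simp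
  ultimately have "orthogonal (p - m) (p - m)"
    by (simp add: orthogonal_comp_def)
  then show ?thesis
    by (simp add: p_def orthogonal_def)
qed

locale orthogonal_direct_sum =
  fixes U V :: "'a::real_inner set"
  assumes subspace_U: "subspace U" and subspace_V: "subspace V"
    and orthogonal: "U \<subseteq> V\<^sup>\<bottom>" and sum_UNIV: "U + V = UNIV"
begin

definition reflection :: "'a \<Rightarrow> 'a" where
  "reflection y = orth_proj U y - orth_proj V y"

lemma decompose:
  obtains u v where "u \<in> U" "v \<in> V" "y = u + v"
  using sum_UNIV by (metis UNIV_I set_plus_elim)

lemma inner_U_V: "u \<in> U \<Longrightarrow> v \<in> V \<Longrightarrow> inner u v = 0"
  using orthogonal by (auto simp: orthogonal_comp_def orthogonal_def inner_commute)

lemma reflection_add: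
  assumes "u \<in> U" "v \<in> V"
  shows "reflection (u + v) = u - v"
proof -
  have "v \<in> U\<^sup>\<bottom>" "u \<in> V\<^sup>\<bottom>"
    using assms inner_U_V[OF assms(1)] inner_U_V[OF _ assms(2)]
    by (auto simp: orthogonal_comp_def orthogonal_def inner_commute)
  then show ?thesis
    unfolding reflection_def
    using orth_proj_unique[OF subspace_U, of u "u + v"] orth_proj_unique[OF subspace_V, of v "u + v"]
      assms by simp
qed

lemma reflection_reflection: "reflection (reflection y) = y"
proof -
  obtain u v where uv: "u \<in> U" "v \<in> V" "y = u + v"
    by (rule decompose)
  then have "- v \<in> V"
    using subspace_V by (simp add: subspace_neg)
  then show ?thesis
    using reflection_add[OF uv(1,2)] reflection_add[OF uv(1), of "- v"] uv(3) by simp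
qed

lemma inner_reflection: "inner (reflection a) (reflection b) = inner a b"
proof -
  obtain u v u' v' where "u \<in> U" "v \<in> V" "a = u + v" "u' \<in> U" "v' \<in> V" "b = u' + v'"
    by (metis decompose)
  then show ?thesis
    by (simp add: reflection_add inner_add_left inner_add_right inner_diff_left inner_diff_right
        inner_U_V inner_commute[of v u'])
qed

lemma linear_reflection: "linear reflection"
proof (rule linearI)
  fix a b :: 'a and c :: real
  obtain u v u' v' where uv: "u \<in> U" "v \<in> V" "a = u + v" "u' \<in> U" "v' \<in> V" "b = u' + v'"
    by (metis decompose)
  have "reflection (a + b) = reflection ((u + u') + (v + v'))"
    by (simp add: uv algebra_simps)
  also have "\<dots> = (u + u') - (v + v')"
    using uv by (intro reflection_add) (simp_all add: subspace_add subspace_U subspace_V)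
  also have "\<dots> = reflection a + reflection b"
    by (simp add: uv reflection_add)
  finally show "reflection (a + b) = reflection a + reflection b" .
  have "c *\<^sub>R a = c *\<^sub>R u + c *\<^sub>R v"
    by (simp add: uv scaleR_add_right)
  with uv show "reflection (c *\<^sub>R a) = c *\<^sub>R reflection a"
    using reflection_add[of "c *\<^sub>R u" "c *\<^sub>R v"]
    by (simp add: reflection_add subspace_scale subspace_U subspace_V scaleR_diff_right)
qed

lemma bounded_linear_reflection: "bounded_linear reflection"
proof -
  have "norm (reflection a) = norm a" for a
    using inner_reflection[of a a] by (simp add: norm_eq_sqrt_inner)
  then show ?thesis
    using linear_reflection by (intro bounded_linear_intro[where K=1]) (auto simp: linear_add linear_scale)
qed

lemma reflection_conj_swap:
  assumes "linear X" "X ` U \<subseteq> V" "X ` V \<subseteq> U"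
  shows "reflection (X (reflection y)) = - X y"
proof -
  obtain u v where uv: "u \<in> U" "v \<in> V" "y = u + v"
    by (rule decompose)
  have "- X v \<in> U" "X u \<in> V"
    using uv assms(2,3) subspace_U by (auto simp: subspace_neg)
  have "X (reflection y) = - X v + X u"
    using uv assms(1) by (simp add: reflection_add linear_diff)
  then have "reflection (X (reflection y)) = - X v - X u"
    using reflection_add[OF \<open>- X v \<in> U\<close> \<open>X u \<in> V\<close>] by simp
  then show ?thesis
    using uv assms(1) by (simp add: linear_add)
qed

end

lemma skew_funpow_adjoint:
  fixes X :: "'a::real_inner \<Rightarrow> 'a"
  assumes "\<And>a b. inner (X a) b = - inner a (X b)"
  shows "inner ((X ^^ k) a) b = (-1) ^ k * inner a ((X ^^ k) b)"
proof (induction k arbitrary: b)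
  case 0
  then show ?case by simp
next
  case (Suc k)
  have "inner ((X ^^ Suc k) a) b = - inner ((X ^^ k) a) (X b)"
    by (simp add: assms)
  also have "\<dots> = (-1) ^ Suc k * inner a ((X ^^ Suc k) b)"
    by (simp add: Suc funpow_swap1)
  finally show ?case .
qed

lemma skew_funpow_odd_orthogonal:
  fixes X :: "'a::real_inner \<Rightarrow> 'a"
  assumes "\<And>a b. inner (X a) b = - inner a (X b)" "odd n"
  shows "inner a ((X ^^ n) a) = 0"
  using skew_funpow_adjoint[OF assms(1), of n a a] assms(2) by (simp add: inner_commute)

definition orthogonal_orbits :: "('a::real_inner \<Rightarrow> 'a) \<Rightarrow> 'a set \<Rightarrow> bool" where
  "orthogonal_orbits X F \<longleftrightarrow>
     (\<forall>u\<in>F. \<forall>v\<in>F. u \<noteq> v \<longrightarrow> (\<forall>k l. inner ((X ^^ k) u) ((X ^^ l) v) = 0))"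

lemma exists_maximal_orthogonal_orbits:
  "\<exists>F. orthogonal_orbits X F \<and> (\<forall>G. orthogonal_orbits X G \<longrightarrow> F \<subseteq> G \<longrightarrow> G = F)"
proof -
  have "\<Union>C \<in> Collect (orthogonal_orbits X)" if C: "C \<in> chains (Collect (orthogonal_orbits X))" for C
    unfolding mem_Collect_eq orthogonal_orbits_def
  proof (intro ballI impI allI)
    fix u v k l assume "u \<in> \<Union>C" "v \<in> \<Union>C" "u \<noteq> v"
    then obtain F where "F \<in> C" "u \<in> F" "v \<in> F"
      using C by (auto dest: chainsD)
    with \<open>u \<noteq> v\<close> show "inner ((X ^^ k) u) ((X ^^ l) v) = 0"
      using C chainsD2 unfolding orthogonal_orbits_def by blast
  qed
  then show ?thesis
    using Zorn_Lemma[of "Collect (orthogonal_orbits X)"] by blast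
qed

lemma orthogonal_orbits_insert:
  fixes X :: "'a::real_inner \<Rightarrow> 'a"
  assumes skew: "\<And>a b. inner (X a) b = - inner a (X b)" and F: "orthogonal_orbits X F"
    and r: "\<And>v n. v \<in> F \<Longrightarrow> inner r ((X ^^ n) v) = 0"
  shows "orthogonal_orbits X (insert r F)"
proof -
  have r_orbit: "inner ((X ^^ k) r) ((X ^^ l) v) = 0" if "v \<in> F" for k l v
    using skew_funpow_adjoint[OF skew, of k r] r[OF that, of "k + l"] by (simp add: funpow_add)
  then have "inner ((X ^^ l) v) ((X ^^ k) r) = 0" if "v \<in> F" for k l v
    using that by (simp add: inner_commute)
  with F r_orbit show ?thesis
    unfolding orthogonal_orbits_def by auto
qed

lemma maximal_orthogonal_orbits_complete:
  fixes X :: "'a::real_inner \<Rightarrow> 'a"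
  assumes skew: "\<And>a b. inner (X a) b = - inner a (X b)" and F: "orthogonal_orbits X F"
    and maximal: "\<And>G. orthogonal_orbits X G \<Longrightarrow> F \<subseteq> G \<Longrightarrow> G = F"
    and r: "\<And>v n. v \<in> F \<Longrightarrow> inner r ((X ^^ n) v) = 0"
  shows "r = 0"
proof (rule ccontr)
  assume "r \<noteq> 0"
  then have "r \<notin> F"
    using r[of r 0] by auto
  moreover have "insert r F = F"
    using maximal orthogonal_orbits_insert[OF skew F r] by blast
  ultimately show False by blast
qed

lemma closed_orthogonal_subspaces_residual:
  fixes U V :: "'a::{real_inner,complete_space} set"
  assumes U: "subspace U" "closed U" and V: "subspace V" "closed V" and UV: "U \<subseteq> V\<^sup>\<bottom>"
  obtains u v where "u \<in> U" "v \<in> V" "y - u - v \<in> U\<^sup>\<bottom>" "y - u - v \<in> V\<^sup>\<bottom>"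
proof -
  obtain u v where u: "u \<in> U" "y - u \<in> U\<^sup>\<bottom>" and v: "v \<in> V" "y - v \<in> V\<^sup>\<bottom>"
    using closed_subspace_orthogonal_decomposition U V by metis
  have "u \<in> V\<^sup>\<bottom>" "v \<in> U\<^sup>\<bottom>"
    using UV subset_orthogonal_comp_commute u(1) v(1) by blast+
  then have "y - u - v \<in> U\<^sup>\<bottom>" "y - v - u \<in> V\<^sup>\<bottom>"
    using u(2) v(2) subspace_diff[OF subspace_orthogonal_comp] by blast+
  then show thesis
    using that u(1) v(1) by (simp add: algebra_simps)
qed

definition even_orbits :: "('a \<Rightarrow> 'a) \<Rightarrow> 'a set \<Rightarrow> 'a set" where
  "even_orbits X F = {(X ^^ n) u | u n. u \<in> F \<and> even n}"

definition odd_orbits :: "('a \<Rightarrow> 'a) \<Rightarrow> 'a set \<Rightarrow> 'a set" where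
  "odd_orbits X F = {(X ^^ n) u | u n. u \<in> F \<and> odd n}"

lemma image_even_orbits: "X ` even_orbits X F \<subseteq> odd_orbits X F"
  unfolding even_orbits_def odd_orbits_def by (auto intro!: exI[of _ "Suc _"])

lemma image_odd_orbits: "X ` odd_orbits X F \<subseteq> even_orbits X F"
  unfolding even_orbits_def odd_orbits_def by (auto intro!: exI[of _ "Suc _"])

lemma even_orbits_orthogonal_odd_orbits:
  fixes X :: "'a::real_inner \<Rightarrow> 'a"
  assumes skew: "\<And>a b. inner (X a) b = - inner a (X b)" and F: "orthogonal_orbits X F"
  shows "even_orbits X F \<subseteq> (odd_orbits X F)\<^sup>\<bottom>"
proof
  fix a assume "a \<in> even_orbits X F"
  then obtain u k where a: "a = (X ^^ k) u" "u \<in> F" "even k"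
    unfolding even_orbits_def by blast
  have "inner ((X ^^ l) v) a = 0" if "v \<in> F" "odd l" for v l
  proof (cases "u = v")
    case True
    have "inner ((X ^^ l) v) a = (-1) ^ l * inner v ((X ^^ (l + k)) v)"
      by (simp add: a True skew_funpow_adjoint[OF skew] funpow_add)
    then show ?thesis
      using skew_funpow_odd_orthogonal[OF skew] \<open>odd l\<close> \<open>even k\<close> by simp
  next
    case False
    then show ?thesis
      using F a that unfolding orthogonal_orbits_def by auto
  qed
  then show "a \<in> (odd_orbits X F)\<^sup>\<bottom>"
    unfolding odd_orbits_def orthogonal_comp_def orthogonal_def by blast
qed

lemma skew_swaps_orthogonal_direct_sum:
  fixes X :: "'a::{real_inner,complete_space} \<Rightarrow> 'a"
  assumes bl: "bounded_linear X" and skew: "\<And>a b. inner (X a) b = - inner a (X b)"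
  obtains U V where "orthogonal_direct_sum U V" "X ` U \<subseteq> V" "X ` V \<subseteq> U"
proof -
  obtain F where F: "orthogonal_orbits X F"
    and maximal: "\<And>G. orthogonal_orbits X G \<Longrightarrow> F \<subseteq> G \<Longrightarrow> G = F"
    using exists_maximal_orthogonal_orbits by blast
  define U where "U = closure (span (even_orbits X F))"
  define V where "V = closure (span (odd_orbits X F))"
  have U: "subspace U" "closed U" and V: "subspace V" "closed V"
    unfolding U_def V_def by (simp_all add: subspace_closure)
  have UV: "U \<subseteq> V\<^sup>\<bottom>"
    unfolding U_def V_def
    by (rule closure_span_orthogonal_comp[OF even_orbits_orthogonal_odd_orbits[OF skew F]])
  have swap: "X ` U \<subseteq> V" "X ` V \<subseteq> U"
    unfolding U_def V_def
    by (simp_all add: bounded_linear_image_closure_span_subset[OF bl] image_even_orbits image_odd_orbits)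
  have "even_orbits X F \<subseteq> U" "odd_orbits X F \<subseteq> V"
    unfolding U_def V_def by (meson closure_subset span_superset subset_trans)+
  then have orbits: "(X ^^ n) w \<in> U \<union> V" if "w \<in> F" for w n
    using that unfolding even_orbits_def odd_orbits_def by (cases "even n") auto
  have "y \<in> U + V" for y
  proof -
    obtain u v where "u \<in> U" "v \<in> V" and r: "y - u - v \<in> U\<^sup>\<bottom>" "y - u - v \<in> V\<^sup>\<bottom>"
      using closed_orthogonal_subspaces_residual[OF U V UV] .
    have "inner (y - u - v) ((X ^^ n) w) = 0" if "w \<in> F" for w n
      using orbits[OF that, of n] r unfolding orthogonal_comp_def orthogonal_def
      by (metis (mono_tags, lifting) Un_iff inner_commute mem_Collect_eq)
    then have "y - u - v = 0"
      using maximal_orthogonal_orbits_complete[OF skew F maximal] by blast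
    with \<open>u \<in> U\<close> \<open>v \<in> V\<close> show ?thesis
      by (metis diff_diff_eq eq_iff_diff_eq_0 set_plus_intro)
  qed
  then have "orthogonal_direct_sum U V"
    by unfold_locales (use U V UV in auto)
  with swap show thesis
    using that by blast
qed

lemma subspace_skew_ops: "subspace skew_ops"
  unfolding subspace_def skew_ops_def
  by (simp add: blinfun.add_left blinfun.scaleR_left inner_add_left inner_add_right)

lemma skew_ops_conj_uminus:
  fixes x :: "'a::{real_inner,complete_space} \<Rightarrow>\<^sub>L 'a"
  assumes "x \<in> skew_ops"
  obtains g where "g \<in> orth_group" "g o\<^sub>L g = id_blinfun" "g o\<^sub>L x o\<^sub>L g = - x"
proof -
  obtain U V where sum: "orthogonal_direct_sum U V"
    and swap: "blinfun_apply x ` U \<subseteq> V" "blinfun_apply x ` V \<subseteq> U"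
    using skew_swaps_orthogonal_direct_sum[OF blinfun.bounded_linear_right] assms
    unfolding skew_ops_def by blast
  interpret orthogonal_direct_sum U V
    by (fact sum)
  define g where "g = Blinfun reflection"
  have g: "blinfun_apply g = reflection"
    unfolding g_def using bounded_linear_reflection by (rule bounded_linear_Blinfun_apply)
  have "surj reflection"
    using reflection_reflection by (rule surjI)
  then have "g \<in> orth_group"
    by (simp add: orth_group_def g inner_reflection)
  moreover have "g o\<^sub>L g = id_blinfun"
    by (rule blinfun_eqI) (simp add: g reflection_reflection)
  moreover have "g o\<^sub>L x o\<^sub>L g = - x"
    using reflection_conj_swap[OF bounded_linear.linear[OF blinfun.bounded_linear_right] swap]
    by (intro blinfun_eqI) (simp add: g uminus_blinfun.rep_eq)
  ultimately show thesis
    using that by blast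
qed

lemma Ad_invariant_uminus:
  fixes W :: "('a::{real_inner,complete_space} \<Rightarrow>\<^sub>L 'a) set"
  assumes "Ad_invariant W" "W \<subseteq> skew_ops" "x \<in> W"
  shows "- x \<in> W"
proof -
  obtain g where g: "g \<in> orth_group" "g o\<^sub>L g = id_blinfun" "g o\<^sub>L x o\<^sub>L g = - x"
    using skew_ops_conj_uminus assms(2,3) by blast
  then have "g o\<^sub>L x o\<^sub>L g \<in> W"
    using assms(1,3) unfolding Ad_invariant_def by blast
  with g(3) show ?thesis
    by simp
qed

lemma convex_cone_openin_subspace_eq:
  fixes W S :: "'b::real_normed_vector set"
  assumes "subspace S" "W \<subseteq> S" "openin (top_of_set S) W" "convex_cone_set W" "0 \<in> W"
  shows "W = S"
proof
  have scale: "t *\<^sub>R z \<in> W" if "t > 0" "z \<in> W" for t z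
    using assms(4) that unfolding convex_cone_set_def by blast
  obtain e where e: "e > 0" "\<And>y. y \<in> S \<Longrightarrow> dist y 0 < e \<Longrightarrow> y \<in> W"
    using assms(3,5) unfolding openin_euclidean_subtopology_iff by blast
  show "S \<subseteq> W"
  proof
    fix y assume "y \<in> S"
    show "y \<in> W"
    proof (cases "y = 0")
      case True
      then show ?thesis using assms(5) by simp
    next
      case False
      define c where "c = e / (2 * norm y)"
      have "c > 0"
        using e False by (simp add: c_def)
      have "c *\<^sub>R y \<in> W"
        using e \<open>c > 0\<close> False \<open>y \<in> S\<close> assms(1) by (intro e(2)) (simp_all add: c_def subspace_scale)
      then show ?thesis
        using scale[of "inverse c" "c *\<^sub>R y"] \<open>c > 0\<close> by simp
    qed
  qed
qed (use assms(2) in blast)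

theorem theorem4p7:
  fixes W :: "('a::{real_inner, complete_space} \<Rightarrow>\<^sub>L 'a) set"
  assumes dim: "\<exists>S::'a set. independent S \<and> finite S \<and> card S = 3"
    and sub: "W \<subseteq> skew_ops"
    and ne: "W \<noteq> {}"
    and op: "openin (top_of_set skew_ops) W"
    and cone: "convex_cone_set W"
    and inv: "Ad_invariant W"
  shows "W = skew_ops"
proof -
  obtain x where "x \<in> W"
    using ne by blast
  moreover have "- x \<in> W"
    using Ad_invariant_uminus[OF inv sub \<open>x \<in> W\<close>] .
  ultimately have "0 \<in> W"
    using cone unfolding convex_cone_set_def by force
  then show ?thesis
    using convex_cone_openin_subspace_eq[OF subspace_skew_ops sub op cone] by blast
qed

end
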